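(* Let $a, b, n$ be positive integers with $b>1$, $n>1$ and $\gcd(r_b(n),a)=1$. Then \[\operatorname{Ap}(S_a(b,n)) = \left\{ \sum_{i=2}^n u_i a_i \;\middle|\; (u_2,\ldots,u_n) \in R(b,n)\right\}.\]
   Context: For an integer $\ell \ge 1$, $r_b(\ell) = \sum_{j=0}^{\ell-1} b^j$, and $r_b(0)=0$. For $i \ge 1$, $a_i := r_b(n) + a\, r_b(i-1)$; $S_a(b,n)$ is the numerical semigroup generated by $\{a_i : i\ge 1\}$ (its multiplicity is $a_1$). For a numerical semigroup $S$ and $s\in S$, $\operatorname{Ap}(S,s) = \{\omega \in S : \omega - s \notin S\}$, and $\operatorname{Ap}(S) := \operatorname{Ap}(S, \operatorname{m}(S))$ where $\operatorname{m}(S)$ is the smallest nonzero element of $S$. For $i\ge 2$, $R(b,i)$ is the set of $(u_2,\ldots,u_i) \in \mathbb{N}^{i-1}$ with $0 \le u_j \le b$ for all $j$, and such that $u_j = b$ implies $u_k = 0$ for all $2\le k<j$. *)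

theory Defs
  imports Main
begin

definition repunit :: "nat \<Rightarrow> nat \<Rightarrow> nat" where
  "repunit b l = (\<Sum>j<l. b ^ j)"

definition gen_a :: "nat \<Rightarrow> nat \<Rightarrow> nat \<Rightarrow> nat \<Rightarrow> nat" where
  "gen_a a b n i = repunit b n + a * repunit b (i - 1)"

inductive_set monoid_gen :: "nat set \<Rightarrow> nat set" for A :: "nat set" where
  zero: "0 \<in> monoid_gen A"
| add: "x \<in> A \<Longrightarrow> y \<in> monoid_gen A \<Longrightarrow> x + y \<in> monoid_gen A"

definition S_abn :: "nat \<Rightarrow> nat \<Rightarrow> nat \<Rightarrow> nat set" where
  "S_abn a b n = monoid_gen {gen_a a b n i | i. i \<ge> 1}"

definition multiplicity_ns :: "nat set \<Rightarrow> nat" where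
  "multiplicity_ns S = (LEAST x. x \<in> S \<and> x \<noteq> 0)"

definition Apery_set :: "nat set \<Rightarrow> nat \<Rightarrow> nat set" where
  "Apery_set S s = {w \<in> S. \<not> (w \<ge> s \<and> w - s \<in> S)}"

definition Apery :: "nat set \<Rightarrow> nat set" where
  "Apery S = Apery_set S (multiplicity_ns S)"

(* R(b,i): tuples (u_2,...,u_i), represented as functions nat => nat that vanish
   outside {2..i}, with 0 <= u_j <= b and u_j = b implying u_k = 0 for 2 <= k < j *)
definition R_set :: "nat \<Rightarrow> nat \<Rightarrow> (nat \<Rightarrow> nat) set" where
  "R_set b i = {u. (\<forall>j. j \<notin> {2..i} \<longrightarrow> u j = 0)
                 \<and> (\<forall>j\<in>{2..i}. u j \<le> b)
                 \<and> (\<forall>j\<in>{2..i}. u j = b \<longrightarrow> (\<forall>k\<in>{2..<j}. u k = 0))}"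

end

theory Submission
  imports Defs "HOL-Number_Theory.Cong"
begin

text \<open>
Write \<open>r = r_b(n)\<close>. An element of \<open>S_a(b,n)\<close> built from \<open>C\<close> generators is \<open>r C + a M\<close>,
where \<open>M\<close> is a sum of \<open>C\<close> repunits. Let \<open>h(x)\<close> be the digit sum of the greedy expansion
of \<open>x < r\<close> in the repunits \<open>r_b(n-1), \<dots>, r_b(1)\<close>. Adding one repunit to \<open>M\<close> raises
\<open>h(M mod r) - M div r\<close> by at most one, so \<open>h(M mod r) \<le> C + M div r\<close>; with \<open>a \<ge> 1\<close> this
writes every element of the semigroup as \<open>r h(x) + a x + k r\<close> with \<open>x < r\<close>, \<open>k \<ge> 0\<close>.
The greedy expansions of the residues \<open>x < r\<close> are exactly the tuples of \<open>R(b,n)\<close>, and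
\<open>\<Sum> u\<^sub>i a\<^sub>i = r h(x) + a x\<close> for the expansion \<open>u\<close> of \<open>x\<close>. As \<open>gcd(a,r) = 1\<close>, the residue
of \<open>a x\<close> modulo \<open>r\<close> determines \<open>x\<close>, so these elements are the least elements of the
semigroup in their residue classes, i.e.\ its Apery set.
\<close>

section \<open>Repunits\<close>

lemma repunit_0 [simp]: "repunit b 0 = 0"
  by (simp add: repunit_def)

lemma repunit_Suc: "repunit b (Suc n) = b * repunit b n + 1"
  unfolding repunit_def by (subst sum.lessThan_Suc_shift) (simp add: sum_distrib_left)

lemma repunit_Suc_power: "repunit b (Suc n) = repunit b n + b ^ n"
  by (simp add: repunit_def)

lemma repunit_add: "repunit b (m + n) = repunit b m + b ^ m * repunit b n"
  by (induction n) (simp_all add: repunit_Suc_power algebra_simps power_add)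

lemma repunit_pos: "0 < n \<Longrightarrow> 0 < repunit b n"
  by (cases n) (simp_all add: repunit_Suc)

lemma repunit_strict_mono: "1 \<le> b \<Longrightarrow> j < n \<Longrightarrow> repunit b j < repunit b n"
  by (rule lift_Suc_mono_less[of "repunit b"]) (simp_all add: repunit_Suc_power)

lemma repunit_Suc_div_le:
  assumes "x < repunit b (Suc n)"
  shows "x div repunit b n \<le> b"
    and "x div repunit b n = b \<Longrightarrow> x mod repunit b n = 0"
proof -
  let ?r = "repunit b n"
  have x: "x = x div ?r * ?r + x mod ?r" by (rule div_mult_mod_eq[symmetric])
  have lt: "x < b * ?r + 1" using assms by (simp add: repunit_Suc)
  show "x div ?r \<le> b"
  proof (rule ccontr)
    assume big: "\<not> x div ?r \<le> b"
    then have "Suc b * ?r \<le> x div ?r * ?r" by (intro mult_le_mono1) simp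
    then show False using lt x big by (cases "?r = 0") auto
  qed
  show "x mod ?r = 0" if "x div ?r = b"
    using lt x that by (metis add_less_cancel_left less_one mult.commute)
qed


section \<open>Greedy expansions in repunits\<close>

text \<open>Digit sum of the greedy expansion of \<open>x\<close> in the repunits \<open>r_b(n-1), \<dots>, r_b(1)\<close>; the
  last recursion step divides by \<open>r_b(0) = 0\<close> and contributes nothing.\<close>

fun greedy_digit_sum :: "nat \<Rightarrow> nat \<Rightarrow> nat \<Rightarrow> nat" where
  "greedy_digit_sum b 0 x = 0"
| "greedy_digit_sum b (Suc n) x =
     x div repunit b n + greedy_digit_sum b n (x mod repunit b n)"

lemma greedy_digit_sum_zero [simp]: "greedy_digit_sum b n 0 = 0"
  by (induction n) auto

lemma greedy_digit_sum_Suc_eq: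
  "y < repunit b n \<Longrightarrow> greedy_digit_sum b (Suc n) (d * repunit b n + y) = d + greedy_digit_sum b n y"
  by simp

lemma greedy_digit_sum_repunit_minus_1: "greedy_digit_sum b n (repunit b n - 1) \<le> b"
proof (cases n)
  case (Suc m)
  then show ?thesis by (cases "repunit b m = 0") (simp_all add: repunit_Suc)
qed simp

lemma greedy_digit_sum_pred:
  assumes "1 \<le> b" "0 < z" "z < repunit b n"
  shows "greedy_digit_sum b n (z - 1) \<le> greedy_digit_sum b n z + (b - 1)"
  using assms(2,3)
proof (induction n arbitrary: z)
  case (Suc n)
  let ?r = "repunit b n"
  show ?case
  proof (cases "n = 0")
    case True
    then show ?thesis using Suc.prems by (simp add: repunit_def)
  next
    case False
    then have r: "0 < ?r" by (simp add: repunit_pos)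
    define d y where "d = z div ?r" and "y = z mod ?r"
    have z: "z = d * ?r + y" unfolding d_def y_def by (rule div_mult_mod_eq[symmetric])
    have y: "y < ?r" unfolding y_def using r by simp
    show ?thesis
    proof (cases "0 < y")
      case True
      then have "z - 1 = d * ?r + (y - 1)" using z by simp
      then show ?thesis using Suc.IH[OF True y] y z by simp
    next
      case False
      then have "0 < d" using z Suc.prems(1) by (cases d) auto
      then have "z - 1 = (d - 1) * ?r + (?r - 1)" using z False r
        by (cases d) (auto simp: algebra_simps)
      then have "greedy_digit_sum b (Suc n) (z - 1) = (d - 1) + greedy_digit_sum b n (?r - 1)"
        using r greedy_digit_sum_Suc_eq by (metis diff_less zero_less_one)
      also have "\<dots> \<le> (d - 1) + b" using greedy_digit_sum_repunit_minus_1 by simp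
      finally show ?thesis using z y False \<open>0 < d\<close> by simp
    qed
  qed
qed simp

lemma greedy_digit_sum_Suc_mod_le:
  assumes b: "1 \<le> b" and z: "z < repunit b n" and e: "e \<le> b"
  shows "greedy_digit_sum b (Suc n) ((e * repunit b n + z) mod repunit b (Suc n))
           + (e * repunit b n + z) div repunit b (Suc n)
         \<le> e + greedy_digit_sum b n z"
proof -
  let ?r = "repunit b n" and ?s = "e * repunit b n + z"
  have R: "repunit b (Suc n) = b * ?r + 1" by (rule repunit_Suc)
  show ?thesis
  proof (cases "?s < repunit b (Suc n)")
    case True
    then show ?thesis using z by simp
  next
    case False
    have "e = b"
    proof (rule ccontr)
      assume "e \<noteq> b"
      then have "Suc e * ?r \<le> b * ?r" using e by (intro mult_le_mono1) simp
      then show False using False z R by simp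
    qed
    then obtain w where z_Suc: "z = Suc w" and s: "?s = repunit b (Suc n) + w"
      using False R by (cases z) auto
    have "w < repunit b (Suc n)" using z z_Suc repunit_strict_mono[OF b, of n "Suc n"] by simp
    then have "?s mod repunit b (Suc n) = w" and "?s div repunit b (Suc n) = 1"
      unfolding s by (simp_all add: div_add_self1)
    moreover have "greedy_digit_sum b (Suc n) w = greedy_digit_sum b n w"
      using greedy_digit_sum_Suc_eq[of w b n 0] z z_Suc by simp
    ultimately show ?thesis
      using greedy_digit_sum_pred[OF b _ z] z_Suc \<open>e = b\<close> b by simp
  qed
qed

lemma greedy_digit_sum_add_repunit:
  assumes "1 \<le> b" "x < repunit b n" "1 \<le> j" "j < n"
  shows "greedy_digit_sum b n ((x + repunit b j) mod repunit b n) + (x + repunit b j) div repunit b n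
         \<le> greedy_digit_sum b n x + 1"
  using assms(2-)
proof (induction n arbitrary: x j)
  case (Suc n)
  let ?r = "repunit b n" and ?R = "repunit b (Suc n)" and ?c = "repunit b j"
  have r: "0 < ?r" using Suc.prems by (simp add: repunit_pos)
  define d y where "d = x div ?r" and "y = x mod ?r"
  have x: "x = d * ?r + y" unfolding d_def y_def by (rule div_mult_mod_eq[symmetric])
  have y: "y < ?r" unfolding y_def using r by simp
  have "d \<le> b" and d_eq_b: "d = b \<Longrightarrow> y = 0"
    using repunit_Suc_div_le[OF Suc.prems(1)] by (simp_all add: d_def y_def)
  have gx: "greedy_digit_sum b (Suc n) x = d + greedy_digit_sum b n y"
    using x y greedy_digit_sum_Suc_eq by metis
  show ?case
  proof (cases "j = n")
    case True
    show ?thesis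
    proof (cases "d = b")
      case True
      then have "x + ?c = ?R + (?r - 1)" and "?r - 1 < ?R"
        using x d_eq_b \<open>j = n\<close> r repunit_strict_mono[OF assms(1), of n "Suc n"]
        by (simp_all add: repunit_Suc)
      then have "(x + ?c) mod ?R = ?r - 1" "(x + ?c) div ?R = 1"
        by (simp_all add: div_add_self1)
      moreover have "greedy_digit_sum b (Suc n) (?r - 1) = greedy_digit_sum b n (?r - 1)"
        using greedy_digit_sum_Suc_eq[of "?r - 1" b n 0] r by simp
      ultimately show ?thesis
        using greedy_digit_sum_repunit_minus_1[of b n] gx \<open>d = b\<close> by simp
    next
      case False
      have "x + ?c = Suc d * ?r + y" using x \<open>j = n\<close> by simp
      then show ?thesis
        using greedy_digit_sum_Suc_mod_le[OF assms(1) y, of "Suc d"] False \<open>d \<le> b\<close> gx by simp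
    qed
  next
    case False
    then have j: "j < n" using Suc.prems by simp
    have "?c < ?r" using repunit_strict_mono[OF assms(1) j] .
    define z \<delta> where "z = (y + ?c) mod ?r" and "\<delta> = (y + ?c) div ?r"
    have IH: "greedy_digit_sum b n z + \<delta> \<le> greedy_digit_sum b n y + 1"
      using Suc.IH[OF y Suc.prems(2) j] by (simp add: z_def \<delta>_def)
    have "x + ?c = (d + \<delta>) * ?r + z" and z: "z < ?r"
      using x r by (simp_all add: z_def \<delta>_def algebra_simps)
    moreover have "d + \<delta> \<le> b"
    proof -
      have "y + ?c < 2 * ?r" using y \<open>?c < ?r\<close> by simp
      then have "\<delta> < 2" unfolding \<delta>_def by (rule less_mult_imp_div_less)
      moreover have "d = b \<Longrightarrow> \<delta> = 0" using d_eq_b \<open>?c < ?r\<close> by (simp add: \<delta>_def)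
      ultimately show ?thesis using \<open>d \<le> b\<close> by linarith
    qed
    ultimately show ?thesis
      using greedy_digit_sum_Suc_mod_le[OF assms(1) z, of "d + \<delta>"] IH gx by simp
  qed
qed simp

lemma greedy_digit_sum_mod_add_repunit:
  assumes b: "1 \<le> b" and n: "1 \<le> n"
  shows "greedy_digit_sum b n ((M + repunit b k) mod repunit b n) + M div repunit b n
         \<le> greedy_digit_sum b n (M mod repunit b n) + 1 + (M + repunit b k) div repunit b n"
proof (induction k arbitrary: M rule: less_induct)
  case (less k)
  let ?r = "repunit b n"
  have r: "0 < ?r" using n by (simp add: repunit_pos)
  consider "k = 0" | "1 \<le> k" "k < n" | "k = n" | "n < k" by linarith
  then show ?case
  proof cases
    case 2
    define q x where "q = M div ?r" and "x = M mod ?r"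
    have M: "M + repunit b k = q * ?r + (x + repunit b k)"
      unfolding q_def x_def by (simp add: div_mult_mod_eq)
    have "x < ?r" unfolding x_def using r by simp
    moreover have "(M + repunit b k) mod ?r = (x + repunit b k) mod ?r"
      and "(M + repunit b k) div ?r = q + (x + repunit b k) div ?r"
      using r by (simp_all add: M)
    ultimately show ?thesis using greedy_digit_sum_add_repunit[OF b _ 2, of x]
      unfolding q_def[symmetric] x_def[symmetric] by simp
  next
    case 4
    have "repunit b k = repunit b (k - n) + b ^ (k - n) * ?r"
      using repunit_add[of b "k - n" n] 4 by simp
    then have "(M + repunit b k) mod ?r = (M + repunit b (k - n)) mod ?r"
      and "(M + repunit b k) div ?r = (M + repunit b (k - n)) div ?r + b ^ (k - n)"
      using r by (simp_all add: add.assoc[symmetric])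
    then show ?thesis using less.IH[of "k - n" M] 4 n by simp
  qed (use r in \<open>simp_all add: div_add_self2\<close>)
qed

section \<open>The tuples of \<open>R(b,n)\<close> as greedy expansions\<close>

definition repunit_comb :: "nat \<Rightarrow> nat \<Rightarrow> (nat \<Rightarrow> nat) \<Rightarrow> nat" where
  "repunit_comb b n u = (\<Sum>i=2..n. u i * repunit b (i - 1))"

definition coeff_sum :: "nat \<Rightarrow> (nat \<Rightarrow> nat) \<Rightarrow> nat" where
  "coeff_sum n u = (\<Sum>i=2..n. u i)"

lemma repunit_comb_Suc:
  assumes "1 \<le> n"
  shows "repunit_comb b (Suc n) u = repunit_comb b n (u(Suc n := 0)) + u (Suc n) * repunit b n"
proof -
  have "repunit_comb b n (u(Suc n := 0)) = repunit_comb b n u"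
    unfolding repunit_comb_def by (rule sum.cong) auto
  then show ?thesis using assms unfolding repunit_comb_def by (simp add: atLeastAtMostSuc_conv)
qed

lemma coeff_sum_Suc:
  assumes "1 \<le> n"
  shows "coeff_sum (Suc n) u = coeff_sum n (u(Suc n := 0)) + u (Suc n)"
proof -
  have "coeff_sum n (u(Suc n := 0)) = coeff_sum n u"
    unfolding coeff_sum_def by (rule sum.cong) auto
  then show ?thesis using assms unfolding coeff_sum_def by (simp add: atLeastAtMostSuc_conv)
qed

lemma repunit_comb_eq_0_imp:
  assumes "1 \<le> b" "repunit_comb b n u = 0" "k \<in> {2..n}"
  shows "u k = 0"
proof -
  have "u k * repunit b (k - 1) \<le> repunit_comb b n u"
    unfolding repunit_comb_def using assms(3) by (intro member_le_sum) auto
  moreover have "0 < repunit b (k - 1)" using assms(3) by (simp add: repunit_pos)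
  ultimately show ?thesis using assms(2) by simp
qed

lemma R_setD:
  assumes "u \<in> R_set b n"
  shows "j \<notin> {2..n} \<Longrightarrow> u j = 0"
    and "j \<in> {2..n} \<Longrightarrow> u j \<le> b"
    and "j \<in> {2..n} \<Longrightarrow> u j = b \<Longrightarrow> k \<in> {2..<j} \<Longrightarrow> u k = 0"
  using assms unfolding R_set_def by blast+

lemma R_set_Suc_D:
  assumes u: "u \<in> R_set b (Suc n)" and n: "1 \<le> n"
  shows "u(Suc n := 0) \<in> R_set b n"
    and "u (Suc n) \<le> b"
    and "u (Suc n) = b \<Longrightarrow> k \<in> {2..n} \<Longrightarrow> u k = 0"
proof -
  show "u(Suc n := 0) \<in> R_set b n"
    unfolding R_set_def
  proof (intro CollectI conjI allI ballI impI)
    fix j k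
    show "j \<notin> {2..n} \<Longrightarrow> (u(Suc n := 0)) j = 0" using R_setD(1)[OF u, of j] by auto
    show "j \<in> {2..n} \<Longrightarrow> (u(Suc n := 0)) j \<le> b" using R_setD(2)[OF u, of j] by auto
    show "(u(Suc n := 0)) k = 0" if "j \<in> {2..n}" "(u(Suc n := 0)) j = b" "k \<in> {2..<j}"
      using R_setD(3)[OF u, of j k] that by auto
  qed
  show "u (Suc n) \<le> b" using R_setD(2)[OF u] n by simp
  show "u k = 0" if "u (Suc n) = b" "k \<in> {2..n}"
    using R_setD(3)[OF u, of "Suc n" k] that n by simp
qed

lemma R_set_Suc_I:
  assumes u: "u \<in> R_set b n" and n: "1 \<le> n" and d: "d \<le> b"
    and top: "d = b \<Longrightarrow> \<forall>k\<in>{2..n}. u k = 0"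
  shows "u(Suc n := d) \<in> R_set b (Suc n)"
  unfolding R_set_def
proof (intro CollectI conjI allI ballI impI)
  fix j k
  show "(u(Suc n := d)) j = 0" if "j \<notin> {2..Suc n}"
    using R_setD(1)[OF u, of j] that n by auto
  show "(u(Suc n := d)) j \<le> b" if "j \<in> {2..Suc n}"
    using R_setD(2)[OF u, of j] that d by (cases "j = Suc n") auto
  show "(u(Suc n := d)) k = 0" if "j \<in> {2..Suc n}" "(u(Suc n := d)) j = b" "k \<in> {2..<j}"
  proof (cases "j = Suc n")
    case True
    then show ?thesis using that top by auto
  next
    case False
    then show ?thesis using R_setD(3)[OF u, of j k] that by auto
  qed
qed

lemma repunit_comb_less:
  assumes b: "1 \<le> b" and n: "1 \<le> n" and u: "u \<in> R_set b n"
  shows "repunit_comb b n u < repunit b n"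
  using n u
proof (induction n arbitrary: u rule: nat_induct_at_least)
  case base
  then show ?case by (simp add: repunit_comb_def repunit_def)
next
  case (Suc n)
  let ?r = "repunit b n" and ?u' = "u(Suc n := 0)"
  note D = R_set_Suc_D[OF Suc.prems Suc.hyps]
  have IH: "repunit_comb b n ?u' < ?r" using Suc.IH[OF D(1)] .
  have comb: "repunit_comb b (Suc n) u = repunit_comb b n ?u' + u (Suc n) * ?r"
    by (rule repunit_comb_Suc[OF Suc.hyps])
  show ?case
  proof (cases "u (Suc n) = b")
    case True
    then have "repunit_comb b n ?u' = 0" unfolding repunit_comb_def
      using D(3) by (intro sum.neutral) auto
    then show ?thesis using comb True by (simp add: repunit_Suc)
  next
    case False
    then have "u (Suc n) * ?r \<le> (b - 1) * ?r" using D(2) by (intro mult_le_mono1) simp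
    moreover have "(b - 1) * ?r + ?r = b * ?r" using b by (simp add: diff_mult_distrib)
    ultimately show ?thesis using comb IH unfolding repunit_Suc by linarith
  qed
qed

lemma greedy_digit_sum_repunit_comb:
  assumes b: "1 \<le> b" and n: "1 \<le> n" and u: "u \<in> R_set b n"
  shows "greedy_digit_sum b n (repunit_comb b n u) = coeff_sum n u"
  using n u
proof (induction n arbitrary: u rule: nat_induct_at_least)
  case base
  then show ?case by (simp add: repunit_comb_def coeff_sum_def)
next
  case (Suc n)
  let ?u' = "u(Suc n := 0)"
  note D = R_set_Suc_D[OF Suc.prems Suc.hyps]
  have "repunit_comb b (Suc n) u = u (Suc n) * repunit b n + repunit_comb b n ?u'"
    using repunit_comb_Suc[OF Suc.hyps] by simp
  then have "greedy_digit_sum b (Suc n) (repunit_comb b (Suc n) u)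
      = u (Suc n) + greedy_digit_sum b n (repunit_comb b n ?u')"
    using greedy_digit_sum_Suc_eq repunit_comb_less[OF b Suc.hyps D(1)] by presburger
  then show ?case using Suc.IH[OF D(1)] coeff_sum_Suc[OF Suc.hyps, of u] by (simp add: fun_upd_def)
qed

lemma greedy_expansion_in_R_set:
  assumes b: "1 \<le> b" and n: "1 \<le> n" and x: "x < repunit b n"
  shows "\<exists>u\<in>R_set b n. repunit_comb b n u = x \<and> coeff_sum n u = greedy_digit_sum b n x"
  using n x
proof (induction n arbitrary: x rule: nat_induct_at_least)
  case base
  have "(\<lambda>_. 0) \<in> R_set b 1" by (simp add: R_set_def)
  then show ?case using base by (auto simp: repunit_comb_def coeff_sum_def repunit_def)
next
  case (Suc n)
  let ?r = "repunit b n"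
  have r: "0 < ?r" using Suc.hyps by (simp add: repunit_pos)
  define d y where "d = x div ?r" and "y = x mod ?r"
  have x: "x = d * ?r + y" unfolding d_def y_def by (rule div_mult_mod_eq[symmetric])
  have y: "y < ?r" unfolding y_def using r by simp
  then obtain u where u: "u \<in> R_set b n" and comb: "repunit_comb b n u = y"
    and sum: "coeff_sum n u = greedy_digit_sum b n y"
    using Suc.IH by blast
  have d: "d \<le> b" and d_eq_b: "d = b \<Longrightarrow> y = 0"
    using repunit_Suc_div_le[OF Suc.prems] by (simp_all add: d_def y_def)
  have "\<forall>k\<in>{2..n}. u k = 0" if "d = b"
    using repunit_comb_eq_0_imp[OF b] comb d_eq_b[OF that] by blast
  then have "u(Suc n := d) \<in> R_set b (Suc n)" by (rule R_set_Suc_I[OF u Suc.hyps d])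
  moreover have "(u(Suc n := d))(Suc n := 0) = u" using R_setD(1)[OF u, of "Suc n"] by auto
  then have "repunit_comb b (Suc n) (u(Suc n := d)) = x"
    and "coeff_sum (Suc n) (u(Suc n := d)) = greedy_digit_sum b (Suc n) x"
    using repunit_comb_Suc[OF Suc.hyps] coeff_sum_Suc[OF Suc.hyps] comb sum x y by simp_all
  ultimately show ?case by blast
qed

section \<open>The Apery set of \<open>S_a(b,n)\<close>\<close>

lemma monoid_gen_add: "x \<in> monoid_gen A \<Longrightarrow> y \<in> monoid_gen A \<Longrightarrow> x + y \<in> monoid_gen A"
  by (induction x rule: monoid_gen.induct) (auto simp: add.assoc intro: monoid_gen.add)

lemma monoid_gen_base: "g \<in> A \<Longrightarrow> g \<in> monoid_gen A"
  using monoid_gen.add[OF _ monoid_gen.zero] by fastforce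

lemma monoid_gen_mult: "x \<in> monoid_gen A \<Longrightarrow> k * x \<in> monoid_gen A"
  by (induction k) (auto intro: monoid_gen_add monoid_gen.zero)

lemma monoid_gen_sum:
  "finite I \<Longrightarrow> (\<And>i. i \<in> I \<Longrightarrow> f i \<in> monoid_gen A) \<Longrightarrow> (\<Sum>i\<in>I. f i) \<in> monoid_gen A"
  by (induction I rule: finite_induct) (auto intro: monoid_gen_add monoid_gen.zero)

lemma monoid_gen_eq_0_or_ge:
  "x \<in> monoid_gen A \<Longrightarrow> (\<And>g. g \<in> A \<Longrightarrow> m \<le> g) \<Longrightarrow> x = 0 \<or> m \<le> x"
  by (induction x rule: monoid_gen.induct) force+

lemma Apery_set_eqI:
  fixes S T :: "nat set"
  assumes zero: "0 \<in> S" and add: "\<And>x y. x \<in> S \<Longrightarrow> y \<in> S \<Longrightarrow> x + y \<in> S"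
    and m: "m \<in> S" "0 < m" and T: "T \<subseteq> S"
    and decomp: "\<And>s. s \<in> S \<Longrightarrow> \<exists>t\<in>T. \<exists>k. s = t + k * m"
    and minimal: "\<And>t s. t \<in> T \<Longrightarrow> s \<in> S \<Longrightarrow> s mod m = t mod m \<Longrightarrow> t \<le> s"
  shows "Apery_set S m = T"
proof (intro equalityI subsetI)
  have mult: "k * m \<in> S" for k by (induction k) (simp_all add: zero add m(1))
  fix w
  assume "w \<in> Apery_set S m"
  then have w: "w \<in> S" and not_shift: "\<not> (m \<le> w \<and> w - m \<in> S)"
    unfolding Apery_set_def by auto
  obtain t k where t: "t \<in> T" and w_eq: "w = t + k * m" using decomp[OF w] by blast
  have "k = 0"
  proof (rule ccontr)
    assume "k \<noteq> 0"
    then obtain l where "k = Suc l" by (cases k) auto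
    then have "m \<le> w" and "w - m = t + l * m" using w_eq by simp_all
    moreover have "t + l * m \<in> S" using add T t mult by blast
    ultimately show False using not_shift by simp
  qed
  then show "w \<in> T" using w_eq t by simp
next
  fix t
  assume t: "t \<in> T"
  have "\<not> (m \<le> t \<and> t - m \<in> S)"
  proof
    assume "m \<le> t \<and> t - m \<in> S"
    then have "t \<le> t - m" using minimal[OF t] by (simp add: le_mod_geq)
    then show False using \<open>m \<le> t \<and> t - m \<in> S\<close> m(2) by linarith
  qed
  then show "t \<in> Apery_set S m" using t T unfolding Apery_set_def by auto
qed

lemma sum_gen_a_eq:
  "(\<Sum>i=2..n. u i * gen_a a b n i) = repunit b n * coeff_sum n u + a * repunit_comb b n u"
  unfolding gen_a_def coeff_sum_def repunit_comb_def
  by (simp add: algebra_simps sum.distrib sum_distrib_left)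

lemma sum_gen_a_in_S_abn: "(\<Sum>i=2..n. u i * gen_a a b n i) \<in> S_abn a b n"
  unfolding S_abn_def by (intro monoid_gen_sum monoid_gen_mult monoid_gen_base) auto

lemma repunit_in_S_abn: "repunit b n \<in> S_abn a b n"
  unfolding S_abn_def by (rule monoid_gen_base) (auto simp: gen_a_def intro: exI[of _ 1])

lemma multiplicity_S_abn:
  assumes "1 \<le> n"
  shows "multiplicity_ns (S_abn a b n) = repunit b n"
  unfolding multiplicity_ns_def
proof (rule Least_equality)
  show "repunit b n \<in> S_abn a b n \<and> repunit b n \<noteq> 0"
    using repunit_in_S_abn assms by (simp add: repunit_pos)
next
  fix y
  assume y: "y \<in> S_abn a b n \<and> y \<noteq> 0"
  then have "y = 0 \<or> repunit b n \<le> y"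
    unfolding S_abn_def by (intro monoid_gen_eq_0_or_ge[OF conjunct1]) (auto simp: gen_a_def)
  then show "repunit b n \<le> y" using y by simp
qed

lemma S_abn_invariant:
  assumes b: "1 \<le> b" and n: "1 \<le> n" and s: "s \<in> S_abn a b n"
  shows "\<exists>C M. s = repunit b n * C + a * M
                \<and> greedy_digit_sum b n (M mod repunit b n) \<le> C + M div repunit b n"
  using s unfolding S_abn_def
proof (induction s rule: monoid_gen.induct)
  case zero
  show ?case by (intro exI[of _ 0]) simp
next
  case (add x y)
  let ?r = "repunit b n"
  obtain C M where y: "y = ?r * C + a * M"
    and inv: "greedy_digit_sum b n (M mod ?r) \<le> C + M div ?r"
    using add.IH by blast
  obtain i where x: "x = gen_a a b n i" using add.hyps(1) by blast
  let ?M = "M + repunit b (i - 1)"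
  have "x + y = ?r * (C + 1) + a * ?M" using x y by (simp add: gen_a_def algebra_simps)
  moreover have "greedy_digit_sum b n (?M mod ?r) \<le> (C + 1) + ?M div ?r"
    using greedy_digit_sum_mod_add_repunit[OF b n, of M "i - 1"] inv by linarith
  ultimately show ?case by blast
qed

lemma S_abn_greedy_decomp:
  assumes a: "1 \<le> a" and b: "1 \<le> b" and n: "1 \<le> n" and s: "s \<in> S_abn a b n"
  shows "\<exists>x k. x < repunit b n \<and> s = repunit b n * (greedy_digit_sum b n x + k) + a * x"
proof -
  let ?r = "repunit b n"
  obtain C M where s: "s = ?r * C + a * M"
    and inv: "greedy_digit_sum b n (M mod ?r) \<le> C + M div ?r"
    using S_abn_invariant[OF b n s] by blast
  define q x where "q = M div ?r" and "x = M mod ?r"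
  have "x < ?r" unfolding x_def using n by (simp add: repunit_pos)
  have "q \<le> a * q" using a by simp
  then have "greedy_digit_sum b n x \<le> C + a * q" using inv unfolding q_def x_def by linarith
  moreover have "M = q * ?r + x" unfolding q_def x_def by (rule div_mult_mod_eq[symmetric])
  then have "s = ?r * (C + a * q) + a * x" using s by (simp add: algebra_simps)
  ultimately have "s = ?r * (greedy_digit_sum b n x + (C + a * q - greedy_digit_sum b n x)) + a * x"
    by simp
  then show ?thesis using \<open>x < ?r\<close> by blast
qed

lemma S_abn_eq_R_set_elem_plus_multiple:
  assumes "1 \<le> a" "1 \<le> b" "1 \<le> n" "s \<in> S_abn a b n"
  shows "\<exists>u\<in>R_set b n. \<exists>k. s = (\<Sum>i=2..n. u i * gen_a a b n i) + k * repunit b n"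
proof -
  obtain x k where x: "x < repunit b n"
    and s: "s = repunit b n * (greedy_digit_sum b n x + k) + a * x"
    using S_abn_greedy_decomp[OF assms] by blast
  obtain u where "u \<in> R_set b n" "repunit_comb b n u = x" "coeff_sum n u = greedy_digit_sum b n x"
    using greedy_expansion_in_R_set[OF assms(2,3) x] by blast
  then show ?thesis using s by (intro bexI[of _ u] exI[of _ k]) (simp_all add: sum_gen_a_eq algebra_simps)
qed

lemma sum_gen_a_le_congruent:
  assumes "1 \<le> a" "1 \<le> b" "1 \<le> n" and cop: "coprime a (repunit b n)" and u: "u \<in> R_set b n"
    and s: "s \<in> S_abn a b n"
    and cong: "s mod repunit b n = (\<Sum>i=2..n. u i * gen_a a b n i) mod repunit b n"
  shows "(\<Sum>i=2..n. u i * gen_a a b n i) \<le> s"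
proof -
  let ?r = "repunit b n" and ?c = "repunit_comb b n u"
  obtain x k where x: "x < ?r" and s_eq: "s = ?r * (greedy_digit_sum b n x + k) + a * x"
    using S_abn_greedy_decomp[OF assms(1-3) s] by blast
  have "[a * x = a * ?c] (mod ?r)"
    using cong unfolding s_eq sum_gen_a_eq cong_def by simp
  then have "x = ?c"
    using cong_less_modulus_unique_nat cong_mult_lcancel_nat[OF cop] x
      repunit_comb_less[OF assms(2,3) u] by blast
  then show ?thesis
    using s_eq greedy_digit_sum_repunit_comb[OF assms(2,3) u] by (simp add: sum_gen_a_eq)
qed

theorem theorem15:
  fixes a b n :: nat
  assumes "a > 0" and "b > 1" and "n > 1"
    and "gcd (repunit b n) a = 1"
  shows "Apery (S_abn a b n) = {(\<Sum>i=2..n. u i * gen_a a b n i) | u. u \<in> R_set b n}"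
proof -
  let ?r = "repunit b n" and ?S = "S_abn a b n"
    and ?T = "{(\<Sum>i=2..n. u i * gen_a a b n i) | u. u \<in> R_set b n}"
  have a: "1 \<le> a" and b: "1 \<le> b" and n: "1 \<le> n" using assms by auto
  have cop: "coprime a ?r" using assms(4) by (simp add: coprime_iff_gcd_eq_1 gcd.commute)
  have "Apery_set ?S ?r = ?T"
  proof (rule Apery_set_eqI)
    show "0 \<in> ?S" unfolding S_abn_def by (rule monoid_gen.zero)
    show "x + y \<in> ?S" if "x \<in> ?S" "y \<in> ?S" for x y
      using that unfolding S_abn_def by (rule monoid_gen_add)
    show "?r \<in> ?S" by (rule repunit_in_S_abn)
    show "0 < ?r" using n by (simp add: repunit_pos)
    show "?T \<subseteq> ?S" using sum_gen_a_in_S_abn by blast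
    show "\<exists>t\<in>?T. \<exists>k. s = t + k * ?r" if "s \<in> ?S" for s
      using S_abn_eq_R_set_elem_plus_multiple[OF a b n that] by blast
    show "t \<le> s" if "t \<in> ?T" "s \<in> ?S" "s mod ?r = t mod ?r" for t s
      using that sum_gen_a_le_congruent[OF a b n cop] by blast
  qed
  then show ?thesis unfolding Apery_def multiplicity_S_abn[OF n] .
qed

end
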